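(* Let $X$ be a $T_1$ topological space. The following are equivalent: (i) $X$ is an $F_cP$-space, i.e. $C_c(X)_F$ is von Neumann regular; (ii) for every $Z\in Z[C_c(X)_F]$ there exists a finite $F\subseteq X$ such that $Z\setminus F$ is clopen in the subspace $X\setminus F$; (iii) $C_c(X)_F$ is a PP-ring, i.e. the annihilator of every element is generated by an idempotent.
   Context: $C_c(X)_F$ denotes the set of all functions $f:X\to\mathbb{R}$ whose range is countable and whose set of points of discontinuity is finite; it is a commutative ring with unity under pointwise operations. $Z(f)=\{x:f(x)=0\}$, $Z[C_c(X)_F]=\{Z(f):f\in C_c(X)_F\}$. A commutative ring $R$ is von Neumann regular if for every $a\in R$ there is $r\in R$ with $a=a^2r$. $\mathrm{Ann}(f)=\{g: gf=0\}$. *)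

theory Defs
  imports "HOL-Analysis.Analysis"
begin

text \<open>The ring C_c(X)_F: real functions on X with countable range and finitely many
  points of discontinuity. The space X is the whole (T1) type 'a.\<close>
definition CcF :: "('a::topological_space \<Rightarrow> real) set" where
  "CcF = {f. countable (range f) \<and> finite {x. \<not> (f \<longlongrightarrow> f x) (at x)}}"

definition zset :: "('a \<Rightarrow> real) \<Rightarrow> 'a set" where
  "zset f = {x. f x = 0}"

definition ZCcF :: "'a::topological_space set set" where
  "ZCcF = zset ` CcF"

definition AnnCcF :: "('a::topological_space \<Rightarrow> real) \<Rightarrow> ('a \<Rightarrow> real) set" where
  "AnnCcF f = {g \<in> CcF. (\<lambda>x. g x * f x) = (\<lambda>x. 0)}"

definition CcF_von_neumann_regular :: "'a::topological_space itself \<Rightarrow> bool" where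
  "CcF_von_neumann_regular _ \<longleftrightarrow>
     (\<forall>a \<in> (CcF :: ('a \<Rightarrow> real) set). \<exists>r \<in> CcF. a = (\<lambda>x. a x * a x * r x))"

definition CcF_PP_ring :: "'a::topological_space itself \<Rightarrow> bool" where
  "CcF_PP_ring _ \<longleftrightarrow>
     (\<forall>f \<in> (CcF :: ('a \<Rightarrow> real) set). \<exists>e \<in> CcF. (\<lambda>x. e x * e x) = e \<and>
         AnnCcF f = {(\<lambda>x. e x * h x) | h. h \<in> CcF})"

end

theory Submission
  imports Defs
begin

text \<open>
  A regular element f = f f r of C_c(X)_F produces the idempotent e = f r with Z(e) = Z(f);
  a PP-ring produces an idempotent e with Ann(f) = e C_c(X)_F, hence Z(1 - e) = Z(f) (the
  point indicators lie in Ann(f) for every zero of f).  An idempotent is 0/1-valued, so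
  at each of its (all but finitely many) points of continuity it is locally constant: its
  zero set is open once a finite set is removed.  Conversely, if Z(f) is open off a finite
  set, the pointwise inverse of f (with 1/0 = 0) is continuous off that set and the
  discontinuities of f, so it is the required r.  Finally, off the discontinuities of f
  the complement of Z(f) is open anyway, which turns "open off a finite set" into the
  clopen condition (ii).
\<close>

definition discontinuities :: "('a::topological_space \<Rightarrow> 'b::topological_space) \<Rightarrow> 'a set" where
  "discontinuities f = {x. \<not> (f \<longlongrightarrow> f x) (at x)}"

definition open_off_finite :: "'a::topological_space set \<Rightarrow> bool" where
  "open_off_finite S \<longleftrightarrow> (\<exists>F. finite F \<and> open (S - F))"

lemma CcF_iff: "f \<in> CcF \<longleftrightarrow> countable (range f) \<and> finite (discontinuities f)"
  by (simp add: CcF_def discontinuities_def)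

lemma open_Diff_finite_if_eventually:
  fixes S :: "'a::t1_space set"
  assumes "finite F" and "\<And>x. x \<in> S - F \<Longrightarrow> eventually (\<lambda>y. y \<in> S) (nhds x)"
  shows "open (S - F)"
  unfolding open_subopen[of "S - F"]
proof
  fix x assume x: "x \<in> S - F"
  have "eventually (\<lambda>y. y \<in> - F) (nhds x)"
    using x finite_imp_closed[OF \<open>finite F\<close>] by (intro eventually_nhds_in_open) auto
  with assms(2)[OF x] have "eventually (\<lambda>y. y \<in> S - F) (nhds x)"
    by eventually_elim auto
  then show "\<exists>T. open T \<and> x \<in> T \<and> T \<subseteq> S - F"
    unfolding eventually_nhds by blast
qed


lemma CcF_combine:
  assumes "f \<in> CcF" "g \<in> CcF"
    and "\<And>x. (f \<longlongrightarrow> f x) (at x) \<Longrightarrow> (g \<longlongrightarrow> g x) (at x) \<Longrightarrow>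
           ((\<lambda>y. h (f y) (g y)) \<longlongrightarrow> h (f x) (g x)) (at x)"
  shows "(\<lambda>x. h (f x) (g x)) \<in> CcF"
proof -
  have "range (\<lambda>x. h (f x) (g x)) \<subseteq> case_prod h ` (range f \<times> range g)"
    by auto
  moreover have "countable (case_prod h ` (range f \<times> range g))"
    using assms(1,2) by (simp add: CcF_iff)
  ultimately have "countable (range (\<lambda>x. h (f x) (g x)))"
    by (rule countable_subset)
  moreover have "discontinuities (\<lambda>x. h (f x) (g x)) \<subseteq> discontinuities f \<union> discontinuities g"
    using assms(3) by (auto simp: discontinuities_def)
  then have "finite (discontinuities (\<lambda>x. h (f x) (g x)))"
    by (rule finite_subset) (use assms(1,2) in \<open>simp add: CcF_iff\<close>)
  ultimately show ?thesis by (simp add: CcF_iff)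
qed

lemma CcF_mult: "f \<in> CcF \<Longrightarrow> g \<in> CcF \<Longrightarrow> (\<lambda>x. f x * g x) \<in> CcF"
  by (rule CcF_combine) (auto intro: tendsto_mult)

lemma CcF_diff: "f \<in> CcF \<Longrightarrow> g \<in> CcF \<Longrightarrow> (\<lambda>x. f x - g x) \<in> CcF"
  by (rule CcF_combine) (auto intro: tendsto_diff)

lemma CcF_const: "(\<lambda>x. c) \<in> CcF"
  by (simp add: CcF_def)

lemma CcF_point_indicator: "(\<lambda>y. if y = (a::'a::t1_space) then 1 else 0 :: real) \<in> CcF"
proof -
  have "discontinuities (\<lambda>y. if y = a then 1 else 0 :: real) \<subseteq> {a}"
  proof
    fix x assume x: "x \<in> discontinuities (\<lambda>y. if y = a then 1 else 0 :: real)"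
    have "x = a"
    proof (rule ccontr)
      assume "x \<noteq> a"
      have "eventually (\<lambda>y. y \<noteq> a) (at x)" by (rule eventually_neq_at_within)
      then have "eventually (\<lambda>y. (if y = a then 1 else 0 :: real) = (if x = a then 1 else 0)) (at x)"
        by eventually_elim (use \<open>x \<noteq> a\<close> in simp)
      with x show False
        by (auto simp: discontinuities_def dest: tendsto_eventually)
    qed
    then show "x \<in> {a}" by simp
  qed
  moreover have "range (\<lambda>y. if y = a then 1 else 0 :: real) \<subseteq> {0, 1}" by auto
  ultimately show ?thesis
    by (auto simp: CcF_iff intro: finite_subset countable_subset)
qed

text \<open>Real division gives \<open>inverse 0 = 0\<close>, which is the value wanted on Z(f).\<close>
lemma CcF_inverse:
  fixes f :: "'a::t1_space \<Rightarrow> real"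
  assumes f: "f \<in> CcF" and "finite F" and open_zeros: "open (zset f - F)"
  shows "(\<lambda>x. inverse (f x)) \<in> CcF"
proof -
  have "discontinuities (\<lambda>x. inverse (f x)) \<subseteq> F \<union> discontinuities f"
  proof
    fix x assume x: "x \<in> discontinuities (\<lambda>x. inverse (f x))"
    show "x \<in> F \<union> discontinuities f"
    proof (rule ccontr)
      assume "x \<notin> F \<union> discontinuities f"
      then have "x \<notin> F" and cont: "(f \<longlongrightarrow> f x) (at x)"
        by (auto simp: discontinuities_def)
      have "((\<lambda>x. inverse (f x)) \<longlongrightarrow> inverse (f x)) (at x)"
      proof (cases "f x = 0")
        case True
        with \<open>x \<notin> F\<close> have "eventually (\<lambda>y. y \<in> zset f - F) (at x)"
          using open_zeros by (intro eventually_at_in_open') (auto simp: zset_def)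
        then have "eventually (\<lambda>y. inverse (f y) = inverse (f x)) (at x)"
          by eventually_elim (simp add: zset_def True)
        then show ?thesis by (rule tendsto_eventually)
      next
        case False
        then show ?thesis using cont by (rule tendsto_inverse[rotated])
      qed
      with x show False by (simp add: discontinuities_def)
    qed
  qed
  moreover have "range (\<lambda>x. inverse (f x)) = inverse ` range f" by auto
  ultimately show ?thesis
    using f \<open>finite F\<close> by (auto simp: CcF_iff intro: finite_subset)
qed


lemma regular_factor_idempotent:
  fixes a r :: "'a::idom"
  assumes "a = a * a * r"
  shows "(a * r) * (a * r) = a * r" and "a * r = 0 \<longleftrightarrow> a = 0"
proof -
  show "(a * r) * (a * r) = a * r"
    using assms by (metis mult.assoc mult.commute)
  show "a * r = 0 \<longleftrightarrow> a = 0"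
    using assms by (metis mult.assoc mult_zero_left mult_zero_right)
qed

lemma idempotent_eq_0_or_1: "(e::'a::idom) * e = e \<Longrightarrow> e = 0 \<or> e = 1"
  by (metis mult_cancel_left2 mult_zero_left)

lemma locally_constant_if_continuous_01:
  fixes g :: "'a::topological_space \<Rightarrow> real"
  assumes "(g \<longlongrightarrow> g x) (at x)" and "\<And>y. g y = 0 \<or> g y = 1"
  shows "eventually (\<lambda>y. g y = g x) (nhds x)"
proof -
  have "eventually (\<lambda>y. dist (g y) (g x) < 1) (at x)"
    using assms(1) by (rule tendstoD) simp
  then have "eventually (\<lambda>y. g y = g x) (at x)"
  proof eventually_elim
    case (elim y)
    then show "g y = g x"
      using assms(2)[of y] assms(2)[of x] by (auto simp: dist_real_def)
  qed
  then show ?thesis by (simp add: eventually_nhds_conv_at)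
qed

lemma open_off_finite_zset_idempotent:
  fixes e :: "'a::t1_space \<Rightarrow> real"
  assumes "e \<in> CcF" and idem: "\<And>x. e x * e x = e x"
  shows "open_off_finite (zset e)"
  unfolding open_off_finite_def
proof (intro exI conjI)
  show "finite (discontinuities e)" using assms(1) by (simp add: CcF_iff)
  show "open (zset e - discontinuities e)"
  proof (rule open_Diff_finite_if_eventually[OF \<open>finite (discontinuities e)\<close>])
    fix x assume x: "x \<in> zset e - discontinuities e"
    have "eventually (\<lambda>y. e y = e x) (nhds x)"
      using x idem idempotent_eq_0_or_1
      by (intro locally_constant_if_continuous_01) (auto simp: discontinuities_def)
    then show "eventually (\<lambda>y. y \<in> zset e) (nhds x)"
      by eventually_elim (use x in \<open>simp add: zset_def\<close>)
  qed
qed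

lemma open_nonzeros_Diff_discontinuities:
  fixes f :: "'a::t1_space \<Rightarrow> real"
  assumes "f \<in> CcF"
  shows "open (- zset f - discontinuities f)"
proof (rule open_Diff_finite_if_eventually)
  show "finite (discontinuities f)" using assms by (simp add: CcF_iff)
  fix x assume x: "x \<in> - zset f - discontinuities f"
  then have "(f \<longlongrightarrow> f x) (nhds x)"
    by (simp add: discontinuities_def tendsto_nhds_iff)
  moreover have "f x \<noteq> 0" using x by (simp add: zset_def)
  ultimately show "eventually (\<lambda>y. y \<in> - zset f) (nhds x)"
    by (auto simp: zset_def dest: tendsto_imp_eventually_ne)
qed

lemma zset_clopen_off_finite_iff:
  fixes f :: "'a::t1_space \<Rightarrow> real"
  assumes f: "f \<in> CcF"
  shows "(\<exists>F. finite F \<and> openin (top_of_set (UNIV - F)) (zset f - F)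
                       \<and> closedin (top_of_set (UNIV - F)) (zset f - F))
         \<longleftrightarrow> open_off_finite (zset f)"
proof
  assume "\<exists>F. finite F \<and> openin (top_of_set (UNIV - F)) (zset f - F)
                       \<and> closedin (top_of_set (UNIV - F)) (zset f - F)"
  then obtain F where "finite F" and "openin (top_of_set (UNIV - F)) (zset f - F)"
    by blast
  then show "open_off_finite (zset f)"
    unfolding open_off_finite_def
    using openin_open_eq[of "UNIV - F"] finite_imp_closed by (auto simp: open_Diff)
next
  assume "open_off_finite (zset f)"
  then obtain F where "finite F" and "open (zset f - F)"
    unfolding open_off_finite_def by blast
  define G where "G = F \<union> discontinuities f"
  have "finite G" using \<open>finite F\<close> f by (simp add: G_def CcF_iff)
  then have open_compl: "open (UNIV - G)"
    by (simp add: open_Diff finite_imp_closed)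
  have "zset f - G = (zset f - F) - discontinuities f"
    by (auto simp: G_def)
  then have "open (zset f - G)"
    using \<open>open (zset f - F)\<close> f by (simp add: open_Diff finite_imp_closed CcF_iff)
  moreover have "(UNIV - G) - (zset f - G) = (- zset f - discontinuities f) - F"
    by (auto simp: G_def)
  then have "open ((UNIV - G) - (zset f - G))"
    using open_nonzeros_Diff_discontinuities[OF f] \<open>finite F\<close>
    by (simp add: open_Diff finite_imp_closed)
  ultimately show "\<exists>F. finite F \<and> openin (top_of_set (UNIV - F)) (zset f - F)
                       \<and> closedin (top_of_set (UNIV - F)) (zset f - F)"
    using \<open>finite G\<close> open_compl
    by (intro exI[of _ G]) (auto simp: openin_open_eq closedin_def)
qed


lemma CcF_von_neumann_regular_iff_open_off_finite:
  "CcF_von_neumann_regular TYPE('a::t1_space)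
     \<longleftrightarrow> (\<forall>f \<in> (CcF :: ('a \<Rightarrow> real) set). open_off_finite (zset f))"
proof safe
  fix f :: "'a \<Rightarrow> real"
  assume "CcF_von_neumann_regular TYPE('a)" and f: "f \<in> CcF"
  then obtain r where "r \<in> CcF" and fr: "\<And>x. f x = f x * f x * r x"
    unfolding CcF_von_neumann_regular_def by (metis (mono_tags))
  have "open_off_finite (zset (\<lambda>x. f x * r x))"
    using CcF_mult[OF f \<open>r \<in> CcF\<close>] regular_factor_idempotent(1)[OF fr]
    by (rule open_off_finite_zset_idempotent)
  moreover have "zset (\<lambda>x. f x * r x) = zset f"
    using regular_factor_idempotent(2)[OF fr] by (simp add: zset_def)
  ultimately show "open_off_finite (zset f)" by simp
next
  assume zsets: "\<forall>f \<in> (CcF :: ('a \<Rightarrow> real) set). open_off_finite (zset f)"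
  show "CcF_von_neumann_regular TYPE('a)"
    unfolding CcF_von_neumann_regular_def
  proof
    fix f :: "'a \<Rightarrow> real" assume f: "f \<in> CcF"
    then obtain F where "finite F" "open (zset f - F)"
      using zsets unfolding open_off_finite_def by blast
    with f have "(\<lambda>x. inverse (f x)) \<in> CcF" by (rule CcF_inverse)
    moreover have "f x = f x * f x * inverse (f x)" for x
      by (cases "f x = 0") simp_all
    ultimately show "\<exists>r\<in>CcF. f = (\<lambda>x. f x * f x * r x)"
      by (intro bexI[of _ "\<lambda>x. inverse (f x)"]) (simp_all add: fun_eq_iff)
  qed
qed

lemma CcF_PP_ring_if_von_neumann_regular:
  assumes "CcF_von_neumann_regular TYPE('a::topological_space)"
  shows "CcF_PP_ring TYPE('a)"
  unfolding CcF_PP_ring_def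
proof
  fix f :: "'a \<Rightarrow> real" assume f: "f \<in> CcF"
  then obtain r where "r \<in> CcF" and fr: "\<And>x. f x = f x * f x * r x"
    using assms unfolding CcF_von_neumann_regular_def by (metis (mono_tags))
  define e where "e x = 1 - f x * r x" for x
  have e_eq: "e x = (if f x = 0 then 1 else 0)" for x
    using regular_factor_idempotent[OF fr[of x]] idempotent_eq_0_or_1
    by (auto simp: e_def)
  have "e \<in> CcF"
    unfolding e_def by (intro CcF_diff CcF_const CcF_mult f \<open>r \<in> CcF\<close>)
  moreover have "(\<lambda>x. e x * e x) = e" by (simp add: fun_eq_iff e_eq)
  moreover have "AnnCcF f = {(\<lambda>x. e x * h x) | h. h \<in> CcF}"
  proof
    show "AnnCcF f \<subseteq> {(\<lambda>x. e x * h x) | h. h \<in> CcF}"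
    proof
      fix g assume "g \<in> AnnCcF f"
      then have "g \<in> CcF" and "g = (\<lambda>x. e x * g x)"
        by (auto simp: AnnCcF_def fun_eq_iff e_eq)
      then show "g \<in> {(\<lambda>x. e x * h x) | h. h \<in> CcF}" by blast
    qed
    show "{(\<lambda>x. e x * h x) | h. h \<in> CcF} \<subseteq> AnnCcF f"
      using CcF_mult[OF \<open>e \<in> CcF\<close>] by (auto simp: AnnCcF_def e_eq)
  qed
  ultimately show "\<exists>e\<in>CcF. (\<lambda>x. e x * e x) = e \<and> AnnCcF f = {(\<lambda>x. e x * h x) | h. h \<in> CcF}"
    by blast
qed

lemma open_off_finite_zset_if_CcF_PP_ring:
  fixes f :: "'a::t1_space \<Rightarrow> real"
  assumes "CcF_PP_ring TYPE('a)" and f: "f \<in> CcF"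
  shows "open_off_finite (zset f)"
proof -
  obtain e where "e \<in> CcF" and idem: "(\<lambda>x. e x * e x) = e"
    and ann: "AnnCcF f = {(\<lambda>x. e x * h x) | h. h \<in> CcF}"
    using assms unfolding CcF_PP_ring_def by blast
  have e_01: "e x = 0 \<or> e x = 1" for x
    using fun_cong[OF idem, of x] by (simp add: idempotent_eq_0_or_1)
  have "e \<in> AnnCcF f"
    using ann CcF_const[of 1] by (auto intro!: exI[of _ "\<lambda>_. 1"])
  then have annihilates: "e x * f x = 0" for x
    by (auto simp: AnnCcF_def dest: fun_cong[of _ _ x])
  have one_on_zeros: "e x = 1" if "f x = 0" for x
  proof -
    have "(\<lambda>y. if y = x then 1 else 0 :: real) \<in> AnnCcF f"
      using that CcF_point_indicator[of x] by (auto simp: AnnCcF_def fun_eq_iff)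
    then obtain h where "\<And>y. (if y = x then 1 else 0 :: real) = e y * h y"
      using ann by (auto simp: fun_eq_iff)
    from this[of x] have "e x \<noteq> 0" by auto
    with e_01 show ?thesis by blast
  qed
  have "zset (\<lambda>x. 1 - e x) = zset f"
    using annihilates one_on_zeros e_01 by (force simp: zset_def)
  moreover have "open_off_finite (zset (\<lambda>x. 1 - e x))"
    using e_01 by (intro open_off_finite_zset_idempotent CcF_diff CcF_const \<open>e \<in> CcF\<close>)
      (auto simp: algebra_simps)
  ultimately show ?thesis by simp
qed

theorem theorem7p6:
  shows "(CcF_von_neumann_regular TYPE('a::t1_space) \<longleftrightarrow>
            (\<forall>Z \<in> (ZCcF :: 'a set set). \<exists>F. finite F \<and>
               openin (subtopology euclidean (UNIV - F)) (Z - F) \<and>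
               closedin (subtopology euclidean (UNIV - F)) (Z - F)))
       \<and> (CcF_von_neumann_regular TYPE('a) \<longleftrightarrow> CcF_PP_ring TYPE('a))"
proof
  show "CcF_von_neumann_regular TYPE('a) \<longleftrightarrow>
          (\<forall>Z \<in> (ZCcF :: 'a set set). \<exists>F. finite F \<and>
             openin (subtopology euclidean (UNIV - F)) (Z - F) \<and>
             closedin (subtopology euclidean (UNIV - F)) (Z - F))"
    unfolding CcF_von_neumann_regular_iff_open_off_finite ZCcF_def
    by (simp add: zset_clopen_off_finite_iff)
  show "CcF_von_neumann_regular TYPE('a) \<longleftrightarrow> CcF_PP_ring TYPE('a)"
    using CcF_PP_ring_if_von_neumann_regular open_off_finite_zset_if_CcF_PP_ring
      CcF_von_neumann_regular_iff_open_off_finite by blast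
qed

end
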